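(* Let $(M,\varphi,\xi_\alpha,\eta^\alpha,g)$, $\alpha\in\{1,2\}$, be a Lorentz globally framed $f$-manifold with $\xi_1$ timelike, and fix $p\in M$. Let $F:(T_pM)^4\to\mathbb{R}$ be a curvature-like map such that for all $x,y,v\in\operatorname{Im}\varphi_p$ and all $\alpha,\beta,\gamma\in\{1,2\}$: $F(x,\xi_\alpha,y,v)=0$, $F(\xi_\alpha,x,\xi_\beta,y)=\varepsilon_\alpha\varepsilon_\beta\, g(x,y)$, $F(\xi_\alpha,x,\xi_\beta,\xi_\gamma)=0$, and $F(\xi_1,\xi_2,\xi_1,\xi_2)=0$. Then the following are equivalent: (a) $F(u,y,u,y)=0$ for every $u\in N_\varphi(\xi_1)$ and every $y\in u^\perp\cap\operatorname{Im}\varphi_p$ (i.e. $F$ vanishes on every degenerate plane $\mathrm{span}\{u,y\}$ of this type); (b) $F(x,y,v,z)=g(S_*(x,y)v,z)-g(S^*(x,y)v,z)$ for all $x,y,v,z\in T_pM$.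
   Context: A Lorentz globally framed $f$-manifold $(M,\varphi,\xi_\alpha,\eta^\alpha,g)$, $\alpha\in\{1,2\}$, is a manifold of dimension $2n+2$ with a $(1,1)$-tensor field $\varphi$ of constant rank $2n$, vector fields $\xi_1,\xi_2$ and $1$-forms $\eta^1,\eta^2$ with $\varphi^2=-I+\eta^1\otimes\xi_1+\eta^2\otimes\xi_2$, $\eta^\alpha(\xi_\beta)=\delta^\alpha_\beta$, and a Lorentz metric $g$ with $g(\varphi X,\varphi Y)=g(X,Y)-\sum_\alpha\varepsilon_\alpha\eta^\alpha(X)\eta^\alpha(Y)$, where $\varepsilon_\alpha=g(\xi_\alpha,\xi_\alpha)=\pm1$ (here $\varepsilon_1=-1$, $\varepsilon_2=1$). Put $\tilde\xi=\xi_1+\xi_2$ and $\tilde\eta=\sum_\alpha\varepsilon_\alpha\eta^\alpha$. A curvature-like map $F:V^4\to\mathbb{R}$ is a multilinear map with $F(y,x,z,w)=-F(x,y,z,w)$, $F(z,w,x,y)=F(x,y,z,w)$, and $F(x,y,z,w)+F(x,z,w,y)+F(x,w,y,z)=0$. $N_\varphi(\xi_1)=\{(\xi_1)_p+x: x\in\operatorname{Im}\varphi_p,\ g(x,x)=1\}$. The $(1,3)$-tensors $S^*,S_*$ are $S^*(x,y)v=\tilde\eta(y)\tilde\eta(v)x-\tilde\eta(x)\tilde\eta(v)y+g(y,v)\tilde\eta(x)\tilde\xi-g(x,v)\tilde\eta(y)\tilde\xi$, $S_*(x,y)v=-g(\varphi y,\varphi v)\varphi^2x+g(\varphi x,\varphi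 v)\varphi^2y$. *)

theory Defs
  imports "HOL-Analysis.Analysis"
begin

text \<open>Pointwise (linear-algebraic) model of a Lorentz globally framed f-manifold at a point p:
  the tangent space T_pM is a finite-dimensional real vector space 'v.\<close>

definition eps :: "nat \<Rightarrow> real" where
  "eps \<alpha> = (if \<alpha> = 1 then -1 else 1)"

definition neg_definite_on :: "('v \<Rightarrow> 'v \<Rightarrow> real) \<Rightarrow> 'v::real_vector set \<Rightarrow> bool" where
  "neg_definite_on g W \<longleftrightarrow> (\<forall>w\<in>W. w \<noteq> 0 \<longrightarrow> g w w < 0)"

definition lorentz_metric :: "('v::euclidean_space \<Rightarrow> 'v \<Rightarrow> real) \<Rightarrow> bool" where
  "lorentz_metric g \<longleftrightarrow> bilinear g \<and> (\<forall>x y. g x y = g y x)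
     \<and> (\<forall>x. (\<forall>y. g x y = 0) \<longrightarrow> x = 0)
     \<and> (\<exists>W. subspace W \<and> dim W = 1 \<and> neg_definite_on g W)
     \<and> (\<forall>W. subspace W \<and> neg_definite_on g W \<longrightarrow> dim W \<le> 1)"

definition lorentz_gf_f_space ::
  "nat \<Rightarrow> ('v::euclidean_space \<Rightarrow> 'v) \<Rightarrow> (nat \<Rightarrow> 'v) \<Rightarrow> (nat \<Rightarrow> 'v \<Rightarrow> real)
     \<Rightarrow> ('v \<Rightarrow> 'v \<Rightarrow> real) \<Rightarrow> bool" where
  "lorentz_gf_f_space n \<phi> \<xi> \<eta> g \<longleftrightarrow>
     DIM('v) = 2*n + 2 \<and>
     linear \<phi> \<and> dim (range \<phi>) = 2*n \<and>
     (\<forall>\<alpha>\<in>{1,2}. linear (\<eta> \<alpha>)) \<and>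
     (\<forall>x. \<phi> (\<phi> x) = - x + \<eta> 1 x *\<^sub>R \<xi> 1 + \<eta> 2 x *\<^sub>R \<xi> 2) \<and>
     (\<forall>\<alpha>\<in>{1,2}. \<forall>\<beta>\<in>{1,2}. \<eta> \<alpha> (\<xi> \<beta>) = (if \<alpha> = \<beta> then 1 else 0)) \<and>
     lorentz_metric g \<and>
     (\<forall>\<alpha>\<in>{1,2}. g (\<xi> \<alpha>) (\<xi> \<alpha>) = eps \<alpha>) \<and>
     (\<forall>x y. g (\<phi> x) (\<phi> y) = g x y - (\<Sum>\<alpha>\<in>{1,2}. eps \<alpha> * \<eta> \<alpha> x * \<eta> \<alpha> y))"

definition curvature_like :: "('v::real_vector \<Rightarrow> 'v \<Rightarrow> 'v \<Rightarrow> 'v \<Rightarrow> real) \<Rightarrow> bool" where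
  "curvature_like F \<longleftrightarrow>
     (\<forall>y z w. linear (\<lambda>x. F x y z w)) \<and> (\<forall>x z w. linear (\<lambda>y. F x y z w)) \<and>
     (\<forall>x y w. linear (\<lambda>z. F x y z w)) \<and> (\<forall>x y z. linear (\<lambda>w. F x y z w)) \<and>
     (\<forall>x y z w. F y x z w = - F x y z w) \<and>
     (\<forall>x y z w. F z w x y = F x y z w) \<and>
     (\<forall>x y z w. F x y z w + F x z w y + F x w y z = 0)"

definition xi_tilde :: "(nat \<Rightarrow> 'v::real_vector) \<Rightarrow> 'v" where
  "xi_tilde \<xi> = \<xi> 1 + \<xi> 2"

definition eta_tilde :: "(nat \<Rightarrow> 'v \<Rightarrow> real) \<Rightarrow> 'v \<Rightarrow> real" where
  "eta_tilde \<eta> x = (\<Sum>\<alpha>\<in>{1,2}. eps \<alpha> * \<eta> \<alpha> x)"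

definition N_phi :: "('v::real_vector \<Rightarrow> 'v) \<Rightarrow> ('v \<Rightarrow> 'v \<Rightarrow> real) \<Rightarrow> 'v \<Rightarrow> 'v set" where
  "N_phi \<phi> g \<xi>1 = {\<xi>1 + x | x. x \<in> range \<phi> \<and> g x x = 1}"

definition S_upper :: "(nat \<Rightarrow> 'v::real_vector) \<Rightarrow> (nat \<Rightarrow> 'v \<Rightarrow> real) \<Rightarrow> ('v \<Rightarrow> 'v \<Rightarrow> real)
    \<Rightarrow> 'v \<Rightarrow> 'v \<Rightarrow> 'v \<Rightarrow> 'v" where
  "S_upper \<xi> \<eta> g x y v =
     (eta_tilde \<eta> y * eta_tilde \<eta> v) *\<^sub>R x - (eta_tilde \<eta> x * eta_tilde \<eta> v) *\<^sub>R y
     + (g y v * eta_tilde \<eta> x) *\<^sub>R xi_tilde \<xi> - (g x v * eta_tilde \<eta> y) *\<^sub>R xi_tilde \<xi>"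

definition S_lower :: "('v::real_vector \<Rightarrow> 'v) \<Rightarrow> ('v \<Rightarrow> 'v \<Rightarrow> real) \<Rightarrow> 'v \<Rightarrow> 'v \<Rightarrow> 'v \<Rightarrow> 'v" where
  "S_lower \<phi> g x y v = - (g (\<phi> y) (\<phi> v)) *\<^sub>R \<phi> (\<phi> x) + (g (\<phi> x) (\<phi> v)) *\<^sub>R \<phi> (\<phi> y)"

end

(*
  On Im phi the metric g is positive definite: Im phi is g-orthogonal to the timelike xi_1 and g has
  index one. For g-orthonormal e, y in Im phi the vector xi_1 + e is null, orthogonal to y, and
  F(xi_1 + e, y, xi_1 + e, y) = F(e, y, e, y) - g(y, y) by the hypotheses. So (a) says precisely that
  F has constant sectional curvature -1 on Im phi, and since a curvature-like map is determined by its
  sectional values, that F(x,y,v,z) = g(y,v) g(x,z) - g(x,v) g(y,z) on Im phi. Splitting arbitrary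
  vectors along Im phi and the frame, the hypotheses fix all remaining components of F, and they agree
  with those of g(S_* (x,y) v, z) - g(S^* (x,y) v, z).
*)
theory Submission
  imports Defs
begin

declare One_nat_def [simp del]

lemma curvature_likeD:
  assumes "curvature_like F"
  shows curvature_like_antisym: "F x y z w = - F y x z w"
    and curvature_like_pair_sym: "F x y z w = F z w x y"
    and curvature_like_bianchi: "F x y z w + F x z w y + F x w y z = 0"
    and curvature_like_linear1: "linear (\<lambda>x. F x y z w)"
    and curvature_like_linear2: "linear (\<lambda>y. F x y z w)"
    and curvature_like_linear3: "linear (\<lambda>z. F x y z w)"
    and curvature_like_linear4: "linear (\<lambda>w. F x y z w)"
  using assms unfolding curvature_like_def by (elim conjE; iprover)+

lemma curvature_like_antisym2:
  assumes "curvature_like F"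
  shows "F x y z w = - F x y w z"
  using curvature_like_pair_sym[OF assms, of x y z w] curvature_like_antisym[OF assms, of z w x y]
    curvature_like_pair_sym[OF assms, of w z x y] by simp

lemma curvature_like_simps:
  assumes "curvature_like F"
  shows "F (a + b) y z w = F a y z w + F b y z w" "F (r *\<^sub>R a) y z w = r * F a y z w"
    "F (a - b) y z w = F a y z w - F b y z w" "F (- a) y z w = - F a y z w" "F 0 y z w = 0"
    "F x (a + b) z w = F x a z w + F x b z w" "F x (r *\<^sub>R a) z w = r * F x a z w"
    "F x (a - b) z w = F x a z w - F x b z w" "F x (- a) z w = - F x a z w" "F x 0 z w = 0"
    "F x y (a + b) w = F x y a w + F x y b w" "F x y (r *\<^sub>R a) w = r * F x y a w"
    "F x y (a - b) w = F x y a w - F x y b w" "F x y (- a) w = - F x y a w" "F x y 0 w = 0"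
    "F x y z (a + b) = F x y z a + F x y z b" "F x y z (r *\<^sub>R a) = r * F x y z a"
    "F x y z (a - b) = F x y z a - F x y z b" "F x y z (- a) = - F x y z a" "F x y z 0 = 0"
    "F x x z w = 0" "F x y z z = 0"
  using curvature_likeD(4-7)[OF assms, THEN linear_add] curvature_likeD(4-7)[OF assms, THEN linear_scale]
    curvature_likeD(4-7)[OF assms, THEN linear_diff] curvature_likeD(4-7)[OF assms, THEN linear_neg]
    curvature_likeD(4-7)[OF assms, THEN linear_0]
    curvature_like_antisym[OF assms, of x x z w] curvature_like_antisym2[OF assms, of x y z z]
  by simp_all

lemma curvature_like_diff:
  assumes "curvature_like F" "curvature_like G"
  shows "curvature_like (\<lambda>x y z w. F x y z w - G x y z w)"
proof -
  have alg: "F y x z w - G y x z w = - (F x y z w - G x y z w)"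
    "F z w x y - G z w x y = F x y z w - G x y z w"
    "F x y z w - G x y z w + (F x z w y - G x z w y) + (F x w y z - G x w y z) = 0" for x y z w
    using curvature_likeD(1-3)[OF assms(1), of x y z w] curvature_likeD(1-3)[OF assms(2), of x y z w]
    by linarith+
  then show ?thesis
    unfolding curvature_like_def
    by (intro conjI allI linear_compose_sub alg
        curvature_likeD(4-7)[OF assms(1)] curvature_likeD(4-7)[OF assms(2)])
qed

lemma curvature_like_metric:
  assumes g: "bilinear g" and sym: "\<And>x y. g x y = g y x"
  shows "curvature_like (\<lambda>a b c d. g b c * g a d - g a c * g b d)"
proof -
  have lin: "linear (\<lambda>x. c * g x y)" "linear (\<lambda>x. g x y * c)"
    "linear (\<lambda>x. c * g y x)" "linear (\<lambda>x. g y x * c)" for c y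
    using g by (auto intro!: linearI simp: bilinear_ladd bilinear_radd bilinear_lmul bilinear_rmul algebra_simps)
  have "F x y z w + F x z w y + F x w y z = 0"
    if "F = (\<lambda>a b c d. g b c * g a d - g a c * g b d)" for F x y z w
    using that sym[of z y] sym[of w y] sym[of w z] by (simp add: algebra_simps)
  then show ?thesis
    unfolding curvature_like_def using sym
    by (intro conjI allI linear_compose_sub lin) (simp_all add: algebra_simps)
qed

lemma curvature_like_eq_0_on_subspace:
  assumes G: "curvature_like G" and S: "subspace S"
    and sec: "\<And>x y. x \<in> S \<Longrightarrow> y \<in> S \<Longrightarrow> G x y x y = 0"
    and "x \<in> S" "y \<in> S" "v \<in> S" "z \<in> S"
  shows "G x y v z = 0"
proof -
  note lin = linear_add[OF curvature_like_linear1[OF G]] linear_add[OF curvature_like_linear2[OF G]]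
    linear_add[OF curvature_like_linear3[OF G]] linear_add[OF curvature_like_linear4[OF G]]
  have sym_sec: "G a b a c = 0" if "a \<in> S" "b \<in> S" "c \<in> S" for a b c
  proof -
    have "0 = G a (b + c) a (b + c)" using sec that S by (simp add: subspace_add)
    also have "\<dots> = G a b a c + G a c a b" using sec that by (simp add: lin)
    finally show ?thesis using curvature_like_pair_sym[OF G, of a b a c] by simp
  qed
  have swap: "G a b c d = - G c b a d" if "a \<in> S" "b \<in> S" "c \<in> S" "d \<in> S" for a b c d
  proof -
    have "0 = G (a + c) b (a + c) d" using sym_sec that S by (simp add: subspace_add)
    also have "\<dots> = G a b c d + G c b a d" using sym_sec that by (simp add: lin)
    finally show ?thesis by simp
  qed
  have first: "G x v z y = G x y v z"
    using swap[of x v z y] assms(4-) curvature_like_pair_sym[OF G, of z v x y]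
      curvature_like_antisym2[OF G, of x y v z] by simp
  moreover have "G x z y v = G x y v z"
    using swap[of x z y v] assms(4-) curvature_like_pair_sym[OF G, of x v y z]
      curvature_like_antisym2[OF G, of x v z y] first by linarith
  ultimately show ?thesis using curvature_like_bianchi[OF G, of x y v z] by simp
qed

lemma bilinear_simps:
  assumes "bilinear g"
  shows "g (a + b) c = g a c + g b c" "g c (a + b) = g c a + g c b"
    "g (r *\<^sub>R a) c = r * g a c" "g c (r *\<^sub>R a) = r * g c a"
    "g (a - b) c = g a c - g b c" "g c (a - b) = g c a - g c b"
    "g (- a) c = - g a c" "g c (- a) = - g c a" "g 0 c = 0" "g c 0 = 0"
  using assms by (simp_all add: bilinear_ladd bilinear_radd bilinear_lmul bilinear_rmul
      bilinear_lsub bilinear_rsub bilinear_lneg bilinear_rneg bilinear_lzero bilinear_rzero)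

text \<open>The test vector \<open>u = (g z z + 1) w - (g w z) z\<close> has \<open>g u u = - (g w z)\<^sup>2 (g z z + 2)\<close>.\<close>
lemma semidefinite_isotropic_orthogonal:
  fixes g :: "'a::real_vector \<Rightarrow> 'a \<Rightarrow> real"
  assumes g: "bilinear g" and sym: "\<And>x y. g x y = g y x" and S: "subspace S"
    and nonneg: "\<And>x. x \<in> S \<Longrightarrow> g x x \<ge> 0"
    and w: "w \<in> S" "g w w = 0" and z: "z \<in> S"
  shows "g w z = 0"
proof (rule ccontr)
  assume c: "g w z \<noteq> 0"
  define u where "u = (g z z + 1) *\<^sub>R w - g w z *\<^sub>R z"
  have "0 \<le> g u u"
    using S w z by (simp add: u_def nonneg subspace_diff subspace_scale)
  also have "\<dots> = - (g w z * g w z * (g z z + 2))"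
    using w sym[of z w] by (simp add: u_def bilinear_simps[OF g] algebra_simps)
  also have "\<dots> < 0"
  proof -
    have "0 < g w z * g w z" using c by (metis not_real_square_gt_zero)
    then show ?thesis using nonneg[OF z] by simp
  qed
  finally show False by simp
qed

locale lorentz_framed_f_space =
  fixes n :: nat and \<phi> :: "'v::euclidean_space \<Rightarrow> 'v" and \<xi> :: "nat \<Rightarrow> 'v"
    and \<eta> :: "nat \<Rightarrow> 'v \<Rightarrow> real" and g :: "'v \<Rightarrow> 'v \<Rightarrow> real"
  assumes framed: "lorentz_gf_f_space n \<phi> \<xi> \<eta> g"
begin

lemma
  shows DIM_eq: "DIM('v) = 2 * n + 2"
    and linear_phi: "linear \<phi>"
    and dim_range_phi: "dim (range \<phi>) = 2 * n"
    and linear_eta: "\<alpha> \<in> {1,2} \<Longrightarrow> linear (\<eta> \<alpha>)"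
    and phi_phi: "\<phi> (\<phi> x) = - x + \<eta> 1 x *\<^sub>R \<xi> 1 + \<eta> 2 x *\<^sub>R \<xi> 2"
    and eta_xi: "\<alpha> \<in> {1,2} \<Longrightarrow> \<beta> \<in> {1,2} \<Longrightarrow> \<eta> \<alpha> (\<xi> \<beta>) = (if \<alpha> = \<beta> then 1 else 0)"
    and g_phi_phi: "g (\<phi> x) (\<phi> y) = g x y - (\<Sum>\<alpha>\<in>{1,2}. eps \<alpha> * \<eta> \<alpha> x * \<eta> \<alpha> y)"
    and bilinear_g: "bilinear g"
    and g_sym: "g x y = g y x"
    and g_nondegenerate: "(\<And>y. g x y = 0) \<Longrightarrow> x = 0"
    and neg_definite_dim_le_1: "subspace W \<Longrightarrow> neg_definite_on g W \<Longrightarrow> dim W \<le> 1"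
  using framed unfolding lorentz_gf_f_space_def lorentz_metric_def by auto

lemmas g_simps [simp] = bilinear_simps[OF bilinear_g]

lemma eps_simps [simp]: "eps 1 = -1" "eps 2 = 1"
  by (simp_all add: eps_def)

lemma eta_simps [simp]:
  "\<eta> 1 (a + b) = \<eta> 1 a + \<eta> 1 b" "\<eta> 1 (r *\<^sub>R a) = r * \<eta> 1 a" "\<eta> 1 (a - b) = \<eta> 1 a - \<eta> 1 b"
  "\<eta> 1 (- a) = - \<eta> 1 a" "\<eta> 1 0 = 0"
  "\<eta> 2 (a + b) = \<eta> 2 a + \<eta> 2 b" "\<eta> 2 (r *\<^sub>R a) = r * \<eta> 2 a" "\<eta> 2 (a - b) = \<eta> 2 a - \<eta> 2 b"
  "\<eta> 2 (- a) = - \<eta> 2 a" "\<eta> 2 0 = 0"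
  "\<eta> 1 (\<xi> 1) = 1" "\<eta> 1 (\<xi> 2) = 0" "\<eta> 2 (\<xi> 1) = 0" "\<eta> 2 (\<xi> 2) = 1"
  using linear_eta[of 1] linear_eta[of 2] eta_xi
  by (simp_all add: linear_add linear_scale linear_diff linear_neg linear_0)

lemma phi_simps [simp]:
  "\<phi> (a + b) = \<phi> a + \<phi> b" "\<phi> (r *\<^sub>R a) = r *\<^sub>R \<phi> a" "\<phi> (a - b) = \<phi> a - \<phi> b"
  "\<phi> (- a) = - \<phi> a" "\<phi> 0 = 0"
  using linear_phi by (simp_all add: linear_add linear_scale linear_diff linear_neg linear_0)

lemma subspace_range_phi: "subspace (range \<phi>)"
  using linear_phi by (simp add: linear_subspace_image)

lemma range_phi_Int_span_xi: "range \<phi> \<inter> span {\<xi> 1, \<xi> 2} = {0}"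
proof -
  have "x \<in> {a + b |a b. a \<in> range \<phi> \<and> b \<in> span {\<xi> 1, \<xi> 2}}" for x
  proof -
    have "x = \<phi> (- \<phi> x) + (\<eta> 1 x *\<^sub>R \<xi> 1 + \<eta> 2 x *\<^sub>R \<xi> 2)"
      by (simp add: phi_phi)
    moreover have "\<eta> 1 x *\<^sub>R \<xi> 1 + \<eta> 2 x *\<^sub>R \<xi> 2 \<in> span {\<xi> 1, \<xi> 2}"
      by (simp add: span_add span_base span_scale)
    ultimately show ?thesis by blast
  qed
  then have "DIM('v) + dim (range \<phi> \<inter> span {\<xi> 1, \<xi> 2}) = 2 * n + dim {\<xi> 1, \<xi> 2}"
    using dim_sums_Int[OF subspace_range_phi subspace_span[of "{\<xi> 1, \<xi> 2}"]] dim_range_phi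
    by (simp add: set_eq_iff)
  moreover have "dim {\<xi> 1, \<xi> 2} \<le> 2"
    by (rule order_trans[OF dim_le_card']) (simp_all add: card_insert_if)
  ultimately have "dim (range \<phi> \<inter> span {\<xi> 1, \<xi> 2}) = 0"
    using DIM_eq by linarith
  then show ?thesis
    using dim_eq_0 subspace_range_phi by (auto intro: span_zero subspace_0)
qed

lemma phi_xi [simp]: "\<phi> (\<xi> 1) = 0" "\<phi> (\<xi> 2) = 0"
proof -
  have "\<phi> (\<xi> \<beta>) = 0" if "\<beta> \<in> {1,2}" for \<beta>
  proof -
    have "\<phi> (\<phi> (\<xi> \<beta>)) = 0"
      using that by (auto simp: phi_phi)
    then have "\<phi> (\<xi> \<beta>) = \<eta> 1 (\<phi> (\<xi> \<beta>)) *\<^sub>R \<xi> 1 + \<eta> 2 (\<phi> (\<xi> \<beta>)) *\<^sub>R \<xi> 2"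
      using phi_phi[of "\<phi> (\<xi> \<beta>)"] by (simp add: algebra_simps)
    then have "\<phi> (\<xi> \<beta>) \<in> span {\<xi> 1, \<xi> 2}"
      by (metis span_add span_base span_scale insertI1 insert_commute)
    then show ?thesis
      using range_phi_Int_span_xi by blast
  qed
  then show "\<phi> (\<xi> 1) = 0" "\<phi> (\<xi> 2) = 0" by simp_all
qed

lemma eta_phi [simp]: "\<eta> 1 (\<phi> w) = 0" "\<eta> 2 (\<phi> w) = 0"
proof -
  have "\<phi> (\<phi> (\<phi> w)) = - \<phi> w"
    by (simp add: phi_phi)
  then have e: "\<eta> 1 (\<phi> w) *\<^sub>R \<xi> 1 + \<eta> 2 (\<phi> w) *\<^sub>R \<xi> 2 = 0"
    using phi_phi[of "\<phi> w"] by simp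
  have "\<eta> 1 (\<eta> 1 (\<phi> w) *\<^sub>R \<xi> 1 + \<eta> 2 (\<phi> w) *\<^sub>R \<xi> 2) = 0"
    "\<eta> 2 (\<eta> 1 (\<phi> w) *\<^sub>R \<xi> 1 + \<eta> 2 (\<phi> w) *\<^sub>R \<xi> 2) = 0"
    by (simp_all only: e eta_simps)
  then show "\<eta> 1 (\<phi> w) = 0" "\<eta> 2 (\<phi> w) = 0" by simp_all
qed

lemma eta_range_phi [simp]: "y \<in> range \<phi> \<Longrightarrow> \<eta> 1 y = 0" "y \<in> range \<phi> \<Longrightarrow> \<eta> 2 y = 0"
  by auto

lemma g_xi [simp]: "g x (\<xi> 1) = - \<eta> 1 x" "g x (\<xi> 2) = \<eta> 2 x" "g (\<xi> 1) x = - \<eta> 1 x" "g (\<xi> 2) x = \<eta> 2 x"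
  using g_phi_phi[of x "\<xi> 1"] g_phi_phi[of x "\<xi> 2"] g_sym[of x "\<xi> 1"] g_sym[of x "\<xi> 2"] by simp_all

definition hor :: "'v \<Rightarrow> 'v" where
  "hor x = x - \<eta> 1 x *\<^sub>R \<xi> 1 - \<eta> 2 x *\<^sub>R \<xi> 2"

lemma phi_phi_eq_hor: "\<phi> (\<phi> x) = - hor x"
  by (simp add: phi_phi hor_def algebra_simps)

lemma hor_in_range [simp]: "hor x \<in> range \<phi>"
  by (metis phi_phi_eq_hor phi_simps(4) rangeI minus_minus)

lemma hor_range: "y \<in> range \<phi> \<Longrightarrow> hor y = y"
  by (auto simp: hor_def)

lemma hor_hor [simp]: "hor (hor x) = hor x"
  by (simp add: hor_range)

lemma hor_decomposition: "hor x + \<eta> 1 x *\<^sub>R \<xi> 1 + \<eta> 2 x *\<^sub>R \<xi> 2 = x"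
  by (simp add: hor_def)

text \<open>\<open>Im \<phi>\<close> is \<open>g\<close>-orthogonal to the timelike \<open>\<xi>\<^sub>1\<close>; a timelike vector in it would span,
  together with \<open>\<xi>\<^sub>1\<close>, a negative definite plane, exceeding the Lorentz index.\<close>
lemma range_phi_nonneg:
  assumes w: "w \<in> range \<phi>"
  shows "g w w \<ge> 0"
proof (rule ccontr)
  assume neg: "\<not> g w w \<ge> 0"
  then have "w \<noteq> 0" by auto
  have neg_def: "neg_definite_on g (span {w, \<xi> 1})"
    unfolding neg_definite_on_def
  proof (intro ballI impI)
    fix u assume "u \<in> span {w, \<xi> 1}" "u \<noteq> 0"
    then obtain c d where u: "u = c *\<^sub>R w + d *\<^sub>R \<xi> 1"
      by (auto simp: span_insert span_singleton algebra_simps)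
    have gu: "g u u = c * c * g w w - d * d"
      using w by (simp add: u g_sym[of "\<xi> 1" w] algebra_simps)
    show "g u u < 0"
    proof (cases "c = 0")
      case True
      then have "d \<noteq> 0" using \<open>u \<noteq> 0\<close> u by auto
      then have "d * d > 0" by (metis not_real_square_gt_zero)
      then show ?thesis using gu True by simp
    next
      case False
      then have "c * c * g w w < 0"
        using neg by (metis mult_pos_neg not_real_square_gt_zero not_le)
      moreover have "d * d \<ge> 0" by simp
      ultimately show ?thesis using gu by linarith
    qed
  qed
  have indep: "independent {w, \<xi> 1}"
  proof -
    have "w \<notin> span {\<xi> 1}"
    proof
      assume "w \<in> span {\<xi> 1}"
      then obtain k where k: "w = k *\<^sub>R \<xi> 1" by (auto simp: span_singleton)
      then have "k = 0" using eta_range_phi(1)[OF w] by simp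
      then show False using \<open>w \<noteq> 0\<close> k by simp
    qed
    moreover have "\<xi> 1 \<noteq> 0"
      using eta_simps(11) by force
    ultimately show ?thesis
      by (auto simp: independent_insert)
  qed
  have "w \<noteq> \<xi> 1"
    using eta_range_phi(1)[OF w] by auto
  then have "dim (span {w, \<xi> 1}) = 2"
    using indep by (simp add: dim_eq_card_independent)
  with neg_definite_dim_le_1[OF subspace_span neg_def] show False
    by simp
qed

lemma range_phi_pos:
  assumes w: "w \<in> range \<phi>" "w \<noteq> 0"
  shows "g w w > 0"
proof (rule ccontr)
  assume "\<not> g w w > 0"
  then have isotropic: "g w w = 0"
    using range_phi_nonneg[OF w(1)] by simp
  have "g w x = 0" for x
  proof -
    have "g w (hor x) = 0"
      using semidefinite_isotropic_orthogonal[OF bilinear_g g_sym subspace_range_phi range_phi_nonneg w(1) isotropic]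
      by simp
    moreover have "g w x = g w (hor x + \<eta> 1 x *\<^sub>R \<xi> 1 + \<eta> 2 x *\<^sub>R \<xi> 2)"
      by (simp only: hor_decomposition)
    ultimately show ?thesis
      using w(1) by simp
  qed
  then show False
    using g_nondegenerate w(2) by blast
qed

end

locale frame_curvature = lorentz_framed_f_space n \<phi> \<xi> \<eta> g
  for n :: nat and \<phi> :: "'v::euclidean_space \<Rightarrow> 'v" and \<xi> \<eta> g +
  fixes F :: "'v \<Rightarrow> 'v \<Rightarrow> 'v \<Rightarrow> 'v \<Rightarrow> real"
  assumes curvature_like_F: "curvature_like F"
    and F_range_xi_range_range: "\<And>x y v \<alpha>. x \<in> range \<phi> \<Longrightarrow> y \<in> range \<phi> \<Longrightarrow> v \<in> range \<phi>
      \<Longrightarrow> \<alpha> \<in> {1,2} \<Longrightarrow> F x (\<xi> \<alpha>) y v = 0"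
    and F_xi_range_xi_range: "\<And>x y \<alpha> \<beta>. x \<in> range \<phi> \<Longrightarrow> y \<in> range \<phi> \<Longrightarrow> \<alpha> \<in> {1,2}
      \<Longrightarrow> \<beta> \<in> {1,2} \<Longrightarrow> F (\<xi> \<alpha>) x (\<xi> \<beta>) y = eps \<alpha> * eps \<beta> * g x y"
    and F_xi_range_xi_xi: "\<And>x \<alpha> \<beta> \<gamma>. x \<in> range \<phi> \<Longrightarrow> \<alpha> \<in> {1,2} \<Longrightarrow> \<beta> \<in> {1,2}
      \<Longrightarrow> \<gamma> \<in> {1,2} \<Longrightarrow> F (\<xi> \<alpha>) x (\<xi> \<beta>) (\<xi> \<gamma>) = 0"
    and F_xi_xi_xi_xi: "F (\<xi> 1) (\<xi> 2) (\<xi> 1) (\<xi> 2) = 0"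
begin

lemmas F_simps [simp] = curvature_like_simps[OF curvature_like_F]
lemmas F_antisym = curvature_like_antisym[OF curvature_like_F]
lemmas F_antisym2 = curvature_like_antisym2[OF curvature_like_F]
lemmas F_pair_sym = curvature_like_pair_sym[OF curvature_like_F]

lemma F_one_xi [simp]:
  assumes "a \<in> range \<phi>" "b \<in> range \<phi>" "c \<in> range \<phi>" "\<alpha> \<in> {1,2}"
  shows "F (\<xi> \<alpha>) a b c = 0" "F a (\<xi> \<alpha>) b c = 0" "F a b (\<xi> \<alpha>) c = 0" "F a b c (\<xi> \<alpha>) = 0"
  using assms F_range_xi_range_range[of a b c \<alpha>] F_range_xi_range_range[of c a b \<alpha>]
    F_antisym[of "\<xi> \<alpha>" a b c] F_antisym[of "\<xi> \<alpha>" c a b]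
    F_pair_sym[of a b "\<xi> \<alpha>" c] F_antisym2[of a b c "\<xi> \<alpha>"]
  by simp_all

lemma F_two_xi [simp]:
  assumes "a \<in> range \<phi>" "b \<in> range \<phi>" "\<alpha> \<in> {1,2}" "\<beta> \<in> {1,2}"
  shows "F (\<xi> \<alpha>) a (\<xi> \<beta>) b = eps \<alpha> * eps \<beta> * g a b"
    and "F (\<xi> \<alpha>) a b (\<xi> \<beta>) = - (eps \<alpha> * eps \<beta> * g a b)"
    and "F a (\<xi> \<alpha>) (\<xi> \<beta>) b = - (eps \<alpha> * eps \<beta> * g a b)"
    and "F a (\<xi> \<alpha>) b (\<xi> \<beta>) = eps \<alpha> * eps \<beta> * g a b"
    and "F (\<xi> \<alpha>) (\<xi> \<beta>) a b = 0"
    and "F a b (\<xi> \<alpha>) (\<xi> \<beta>) = 0"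
proof -
  show 1: "F (\<xi> \<alpha>) a (\<xi> \<beta>) b = eps \<alpha> * eps \<beta> * g a b"
    using assms by (rule F_xi_range_xi_range)
  show 2: "F (\<xi> \<alpha>) a b (\<xi> \<beta>) = - (eps \<alpha> * eps \<beta> * g a b)"
    using 1 F_antisym2[of "\<xi> \<alpha>" a b "\<xi> \<beta>"] by simp
  show "F a (\<xi> \<alpha>) (\<xi> \<beta>) b = - (eps \<alpha> * eps \<beta> * g a b)"
    using 1 F_antisym[of a "\<xi> \<alpha>" "\<xi> \<beta>" b] by simp
  show "F a (\<xi> \<alpha>) b (\<xi> \<beta>) = eps \<alpha> * eps \<beta> * g a b"
    using 2 F_antisym[of a "\<xi> \<alpha>" b "\<xi> \<beta>"] by simp
  show 5: "F (\<xi> \<alpha>) (\<xi> \<beta>) a b = 0"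
    using curvature_like_bianchi[OF curvature_like_F, of "\<xi> \<alpha>" "\<xi> \<beta>" a b] 2
      F_xi_range_xi_range[of b a \<alpha> \<beta>] assms g_sym[of a b] by simp
  show "F a b (\<xi> \<alpha>) (\<xi> \<beta>) = 0"
    using 5 F_pair_sym[of a b "\<xi> \<alpha>" "\<xi> \<beta>"] by simp
qed

lemma F_three_xi [simp]:
  assumes "a \<in> range \<phi>" "\<alpha> \<in> {1,2}" "\<beta> \<in> {1,2}" "\<gamma> \<in> {1,2}"
  shows "F (\<xi> \<alpha>) a (\<xi> \<beta>) (\<xi> \<gamma>) = 0" "F a (\<xi> \<alpha>) (\<xi> \<beta>) (\<xi> \<gamma>) = 0"
    "F (\<xi> \<alpha>) (\<xi> \<beta>) (\<xi> \<gamma>) a = 0" "F (\<xi> \<alpha>) (\<xi> \<beta>) a (\<xi> \<gamma>) = 0"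
  using assms F_xi_range_xi_xi[of a \<alpha> \<beta> \<gamma>] F_xi_range_xi_xi[of a \<gamma> \<alpha> \<beta>]
    F_antisym[of a "\<xi> \<alpha>" "\<xi> \<beta>" "\<xi> \<gamma>"] F_pair_sym[of "\<xi> \<alpha>" "\<xi> \<beta>" "\<xi> \<gamma>" a]
    F_antisym2[of "\<xi> \<alpha>" "\<xi> \<beta>" a "\<xi> \<gamma>"]
  by simp_all

lemma F_four_xi [simp]:
  assumes "\<alpha> \<in> {1,2}" "\<beta> \<in> {1,2}" "\<gamma> \<in> {1,2}" "\<delta> \<in> {1,2}"
  shows "F (\<xi> \<alpha>) (\<xi> \<beta>) (\<xi> \<gamma>) (\<xi> \<delta>) = 0"
  using assms F_xi_xi_xi_xi F_antisym[of "\<xi> 2" "\<xi> 1" "\<xi> 1" "\<xi> 2"]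
    F_antisym2[of "\<xi> 1" "\<xi> 2" "\<xi> 2" "\<xi> 1"] F_antisym2[of "\<xi> 2" "\<xi> 1" "\<xi> 2" "\<xi> 1"]
  by auto

definition vanishes_on_null_planes :: bool where
  "vanishes_on_null_planes \<longleftrightarrow>
     (\<forall>u\<in>N_phi \<phi> g (\<xi> 1). \<forall>y. y \<in> range \<phi> \<and> g u y = 0 \<longrightarrow> F u y u y = 0)"

lemma S_formula_imp_vanishes_on_null_planes:
  assumes S: "\<And>x y v z. F x y v z = g (S_lower \<phi> g x y v) z - g (S_upper \<xi> \<eta> g x y v) z"
  shows vanishes_on_null_planes
  unfolding vanishes_on_null_planes_def
proof (intro ballI allI impI)
  fix u y assume "u \<in> N_phi \<phi> g (\<xi> 1)" and y: "y \<in> range \<phi> \<and> g u y = 0"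
  then obtain x where u: "u = \<xi> 1 + x" and x: "x \<in> range \<phi>" "g x x = 1"
    unfolding N_phi_def by blast
  have "g x y = 0" "g y x = 0"
    using y u x by (simp_all add: g_sym[of y x])
  moreover have "\<phi> (\<phi> x) = - x" "\<phi> (\<phi> y) = - y"
    using x y by (simp_all add: phi_phi_eq_hor hor_range)
  ultimately show "F u y u y = 0"
    using S[of u y u y] x y
    by (simp add: u S_lower_def S_upper_def eta_tilde_def xi_tilde_def g_phi_phi)
qed

lemma vanishes_on_null_planes_sectional:
  assumes vanishes_on_null_planes and x: "x \<in> range \<phi>" and y: "y \<in> range \<phi>"
  shows "F x y x y = g x y * g x y - g x x * g y y"
proof (cases "x = 0")
  case False
  define c where "c = sqrt (g x x)"
  have c: "c > 0" "c * c = g x x"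
    using range_phi_pos[OF x False] by (simp_all add: c_def)
  define e where "e = (1 / c) *\<^sub>R x"
  define k where "k = g e y"
  define y' where "y' = y - k *\<^sub>R e"
  have x_eq: "x = c *\<^sub>R e" and y_eq: "y = y' + k *\<^sub>R e"
    using c by (simp_all add: e_def y'_def)
  have e: "e \<in> range \<phi>" "g e e = 1"
    using x c subspace_range_phi by (simp_all add: e_def subspace_scale c(2)[symmetric])
  have y': "y' \<in> range \<phi>" "g e y' = 0"
    using y e subspace_range_phi by (simp_all add: y'_def k_def subspace_diff subspace_scale)
  have "\<xi> 1 + e \<in> N_phi \<phi> g (\<xi> 1)"
    using e unfolding N_phi_def by blast
  moreover have "g (\<xi> 1 + e) y' = 0"
    using y' by simp
  ultimately have "F (\<xi> 1 + e) y' (\<xi> 1 + e) y' = 0"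
    using assms(1) y' unfolding vanishes_on_null_planes_def by blast
  then have "F e y' e y' = - g y' y'"
    using e y' by simp
  moreover have "g y' y' = g y y - k * k"
    using e by (simp add: y'_def k_def g_sym[of y e] algebra_simps)
  ultimately have Fe: "F e y' e y' = k * k - g y y"
    by simp
  have "F x y x y = c * c * F e y' e y'"
    unfolding x_eq y_eq by simp
  also have "\<dots> = (c * k) * (c * k) - (c * c) * g y y"
    by (simp add: Fe algebra_simps)
  also have "\<dots> = g x y * g x y - g x x * g y y"
    using e(2) by (simp add: x_eq k_def)
  finally show ?thesis .
qed simp

lemma vanishes_on_null_planes_horizontal:
  assumes vanishes_on_null_planes
    and "x \<in> range \<phi>" "y \<in> range \<phi>" "v \<in> range \<phi>" "z \<in> range \<phi>"
  shows "F x y v z = g y v * g x z - g x v * g y z"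
proof -
  let ?G = "\<lambda>a b c d. F a b c d - (g b c * g a d - g a c * g b d)"
  have G: "curvature_like ?G"
    using curvature_like_diff[OF curvature_like_F curvature_like_metric[OF bilinear_g g_sym]] .
  have sectional: "F a b a b - (g b a * g a b - g a a * g b b) = 0"
    if "a \<in> range \<phi>" "b \<in> range \<phi>" for a b
    using vanishes_on_null_planes_sectional[OF assms(1) that] by (simp add: g_sym[of b a])
  have "?G x y v z = 0"
    by (rule curvature_like_eq_0_on_subspace[OF G subspace_range_phi sectional assms(2-5)])
  then show ?thesis by simp
qed

lemma horizontal_imp_S_formula:
  assumes horizontal: "\<And>a b c d. a \<in> range \<phi> \<Longrightarrow> b \<in> range \<phi> \<Longrightarrow> c \<in> range \<phi> \<Longrightarrow> d \<in> range \<phi>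
      \<Longrightarrow> F a b c d = g b c * g a d - g a c * g b d"
  shows "F x y v z = g (S_lower \<phi> g x y v) z - g (S_upper \<xi> \<eta> g x y v) z"
proof -
  let ?d = "\<lambda>x. hor x + \<eta> 1 x *\<^sub>R \<xi> 1 + \<eta> 2 x *\<^sub>R \<xi> 2"
  have "F (?d x) (?d y) (?d v) (?d z)
      = g (S_lower \<phi> g (?d x) (?d y) (?d v)) (?d z) - g (S_upper \<xi> \<eta> g (?d x) (?d y) (?d v)) (?d z)"
    by (simp add: S_lower_def S_upper_def eta_tilde_def xi_tilde_def horizontal phi_phi_eq_hor g_phi_phi,
        simp add: g_sym[of "hor _" "hor _"], simp add: algebra_simps)
  then show ?thesis
    by (simp only: hor_decomposition)
qed

end

theorem lemma5p6:
  fixes n :: nat and \<phi> :: "'v::euclidean_space \<Rightarrow> 'v" and \<xi> :: "nat \<Rightarrow> 'v"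
    and \<eta> :: "nat \<Rightarrow> 'v \<Rightarrow> real" and g :: "'v \<Rightarrow> 'v \<Rightarrow> real"
    and F :: "'v \<Rightarrow> 'v \<Rightarrow> 'v \<Rightarrow> 'v \<Rightarrow> real"
  assumes n: "n \<ge> 1"
    and str: "lorentz_gf_f_space n \<phi> \<xi> \<eta> g"
    and F: "curvature_like F"
    and h1: "\<And>x y v \<alpha>. x \<in> range \<phi> \<Longrightarrow> y \<in> range \<phi> \<Longrightarrow> v \<in> range \<phi> \<Longrightarrow> \<alpha> \<in> {1,2}
               \<Longrightarrow> F x (\<xi> \<alpha>) y v = 0"
    and h2: "\<And>x y \<alpha> \<beta>. x \<in> range \<phi> \<Longrightarrow> y \<in> range \<phi> \<Longrightarrow> \<alpha> \<in> {1,2} \<Longrightarrow> \<beta> \<in> {1,2}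
               \<Longrightarrow> F (\<xi> \<alpha>) x (\<xi> \<beta>) y = eps \<alpha> * eps \<beta> * g x y"
    and h3: "\<And>x \<alpha> \<beta> \<gamma>. x \<in> range \<phi> \<Longrightarrow> \<alpha> \<in> {1,2} \<Longrightarrow> \<beta> \<in> {1,2} \<Longrightarrow> \<gamma> \<in> {1,2}
               \<Longrightarrow> F (\<xi> \<alpha>) x (\<xi> \<beta>) (\<xi> \<gamma>) = 0"
    and h4: "F (\<xi> 1) (\<xi> 2) (\<xi> 1) (\<xi> 2) = 0"
  shows "(\<forall>u\<in>N_phi \<phi> g (\<xi> 1). \<forall>y. y \<in> range \<phi> \<and> g u y = 0 \<longrightarrow> F u y u y = 0)
     \<longleftrightarrow> (\<forall>x y v z. F x y v z = g (S_lower \<phi> g x y v) z - g (S_upper \<xi> \<eta> g x y v) z)"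
proof -
  interpret frame_curvature n \<phi> \<xi> \<eta> g F
    by unfold_locales (fact str F h1 h2 h3 h4)+
  have "vanishes_on_null_planes
      \<longleftrightarrow> (\<forall>x y v z. F x y v z = g (S_lower \<phi> g x y v) z - g (S_upper \<xi> \<eta> g x y v) z)"
    using S_formula_imp_vanishes_on_null_planes horizontal_imp_S_formula[OF vanishes_on_null_planes_horizontal]
    by blast
  then show ?thesis
    unfolding vanishes_on_null_planes_def .
qed

end
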